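(* For any dynamic network game $\mathcal{G}$ considered as a safety game: if Destructor wins the safety game $\mathcal{G}$, then he also has a strict strategy that wins the safety game $\mathcal{G}$.
   Context: Dynamic network games $(G,R)$ are played on networks $G=(V,E,A,S,(P_a)_{a\in\Sigma})$ ($V$ nodes, $E$ undirected edges, $A\subseteq V$ active nodes, $S\subseteq A$ strong nodes, labels given by a partition $(P_a)$ of $V$; weak nodes are those in $A\setminus S$). Destructor and Constructor alternate (Destructor first, either may skip); Destructor deletes one weak node per move, Constructor applies one of her rules from $R$ (relabeling, movement, or creation rules). A network is connected if the subgraph induced by the active nodes is connected. In the safety game the initial network is connected and Constructor wins a play iff all networks in it are connected; she wins the game iff she has a strategy winning all plays consistent with it, otherwise Destructor wins. A Destructor strategy is strict if, whenever it is his turn and the current network contains a weak node, he deletes a node (never skips). *)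

theory Defs
  imports Main
begin

text \<open>Networks G = (V, E, A, S, (P_a)_a). The label partition (P_a) is given by a
labelling function; P_a = {v \<in> V. label v = a}. Undirected edges are 2-element sets.\<close>

record ('v, 'l) network =
  nodes  :: "'v set"
  edges  :: "'v set set"
  active :: "'v set"
  strong :: "'v set"
  label  :: "'v \<Rightarrow> 'l"

definition wf_network :: "('v, 'l) network \<Rightarrow> bool" where
  "wf_network G \<longleftrightarrow> finite (nodes G)
     \<and> (\<forall>e \<in> edges G. \<exists>u v. e = {u, v} \<and> u \<noteq> v \<and> u \<in> nodes G \<and> v \<in> nodes G)
     \<and> strong G \<subseteq> active G \<and> active G \<subseteq> nodes G"

definition weak :: "('v, 'l) network \<Rightarrow> 'v set" where
  "weak G = active G - strong G"

definition connected_net :: "('v, 'l) network \<Rightarrow> bool" where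
  "connected_net G \<longleftrightarrow>
     (\<forall>u \<in> active G. \<forall>v \<in> active G.
        (u, v) \<in> {(x, y). x \<in> active G \<and> y \<in> active G \<and> {x, y} \<in> edges G}\<^sup>*)"

definition delete_node :: "'v \<Rightarrow> ('v, 'l) network \<Rightarrow> ('v, 'l) network" where
  "delete_node v G = G\<lparr> nodes := nodes G - {v},
                        edges := {e \<in> edges G. v \<notin> e},
                        active := active G - {v},
                        strong := strong G - {v} \<rparr>"

text \<open>Constructor's rules: a rule set R together with the semantics of rule
application, app r G G' meaning that applying rule r to G can yield G'.\<close>

definition is_play ::
  "('r \<Rightarrow> ('v,'l) network \<Rightarrow> ('v,'l) network \<Rightarrow> bool) \<Rightarrow> 'r set \<Rightarrow>
   ('v,'l) network \<Rightarrow> (nat \<Rightarrow> ('v,'l) network) \<Rightarrow> bool" where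
  "is_play app R G0 p \<longleftrightarrow> p 0 = G0 \<and>
     (\<forall>i. (even i \<longrightarrow> (p (Suc i) = p i \<or> (\<exists>v \<in> weak (p i). p (Suc i) = delete_node v (p i))))
        \<and> (odd i \<longrightarrow> (p (Suc i) = p i \<or> (\<exists>r \<in> R. app r (p i) (p (Suc i))))))"

definition hist :: "(nat \<Rightarrow> ('v,'l) network) \<Rightarrow> nat \<Rightarrow> ('v,'l) network list" where
  "hist p i = map p [0..<Suc i]"

text \<open>Destructor strategies map histories (Destructor to move: odd length) to
None (skip) or Some v (delete v).\<close>
definition legal_D :: "(('v,'l) network list \<Rightarrow> 'v option) \<Rightarrow> bool" where
  "legal_D \<sigma> \<longleftrightarrow> (\<forall>h v. odd (length h) \<longrightarrow> \<sigma> h = Some v \<longrightarrow> v \<in> weak (last h))"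

definition strict_D :: "(('v,'l) network list \<Rightarrow> 'v option) \<Rightarrow> bool" where
  "strict_D \<sigma> \<longleftrightarrow> (\<forall>h. odd (length h) \<longrightarrow> weak (last h) \<noteq> {} \<longrightarrow> \<sigma> h \<noteq> None)"

definition consistent_D ::
  "(('v,'l) network list \<Rightarrow> 'v option) \<Rightarrow> (nat \<Rightarrow> ('v,'l) network) \<Rightarrow> bool" where
  "consistent_D \<sigma> p \<longleftrightarrow> (\<forall>i. even i \<longrightarrow>
      p (Suc i) = (case \<sigma> (hist p i) of None \<Rightarrow> p i | Some v \<Rightarrow> delete_node v (p i)))"

definition legal_C ::
  "('r \<Rightarrow> ('v,'l) network \<Rightarrow> ('v,'l) network \<Rightarrow> bool) \<Rightarrow> 'r set \<Rightarrow>
   (('v,'l) network list \<Rightarrow> ('v,'l) network) \<Rightarrow> bool" where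
  "legal_C app R \<tau> \<longleftrightarrow> (\<forall>h. h \<noteq> [] \<longrightarrow> even (length h) \<longrightarrow>
      \<tau> h = last h \<or> (\<exists>r \<in> R. app r (last h) (\<tau> h)))"

definition consistent_C ::
  "(('v,'l) network list \<Rightarrow> ('v,'l) network) \<Rightarrow> (nat \<Rightarrow> ('v,'l) network) \<Rightarrow> bool" where
  "consistent_C \<tau> p \<longleftrightarrow> (\<forall>i. odd i \<longrightarrow> p (Suc i) = \<tau> (hist p i))"

definition constructor_wins_safety ::
  "('r \<Rightarrow> ('v,'l) network \<Rightarrow> ('v,'l) network \<Rightarrow> bool) \<Rightarrow> 'r set \<Rightarrow>
   ('v,'l) network \<Rightarrow> bool" where
  "constructor_wins_safety app R G0 \<longleftrightarrow> (\<exists>\<tau>. legal_C app R \<tau> \<and>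
     (\<forall>p. is_play app R G0 p \<and> consistent_C \<tau> p \<longrightarrow> (\<forall>i. connected_net (p i))))"

definition destructor_wins_safety ::
  "('r \<Rightarrow> ('v,'l) network \<Rightarrow> ('v,'l) network \<Rightarrow> bool) \<Rightarrow> 'r set \<Rightarrow>
   ('v,'l) network \<Rightarrow> bool" where
  "destructor_wins_safety app R G0 \<longleftrightarrow> \<not> constructor_wins_safety app R G0"

definition D_strategy_wins_safety ::
  "('r \<Rightarrow> ('v,'l) network \<Rightarrow> ('v,'l) network \<Rightarrow> bool) \<Rightarrow> 'r set \<Rightarrow>
   ('v,'l) network \<Rightarrow> (('v,'l) network list \<Rightarrow> 'v option) \<Rightarrow> bool" where
  "D_strategy_wins_safety app R G0 \<sigma> \<longleftrightarrow> legal_D \<sigma> \<and>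
     (\<forall>p. is_play app R G0 p \<and> consistent_D \<sigma> p \<longrightarrow> (\<exists>i. \<not> connected_net (p i)))"

end

theory Submission
  imports Defs
begin

(*
  We compute the part of the game graph from which Destructor can force a
  disconnected network while deleting a node in EVERY one of his moves.  This "strict
  attractor" is described by a mutual inductive definition whose derivations are recorded
  as well-founded rank trees: a Destructor rank names the subtree to continue with after
  a deletion, a Constructor rank maps every possible answer of Constructor to a new rank.

  (1) If the initial network lies in the strict attractor, Destructor follows the rank
      tree; since plays store their full history, the current rank can be recomputed
      from the history, giving a (history-dependent) strategy.  It always deletes a weak
      node when there is one, hence is strict, and by induction on the rank it reaches a
      disconnected network.
  (2) If the initial network lies outside, Constructor stays outside: a Constructor
      position inside the attractor is already a Destructor position inside it (Constructor
      may skip), so skipping never helps Destructor; and if all rule applications led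
      into the attractor, the current position would be in it.  Outside the attractor
      every network is connected, so Constructor wins, i.e. Destructor does not win.
*)

section \<open>The strict attractor with ranks\<close>

text \<open>Rank trees: \<open>Lost\<close> for an already disconnected network, \<open>Del t\<close> for a Destructor
  move continued with rank \<open>t\<close>, \<open>Resp f\<close> for a Constructor position, where \<open>f G'\<close> is the
  rank after Constructor produced \<open>G'\<close>.\<close>
datatype 'a rank = Lost | Del "'a rank" | Resp "'a \<Rightarrow> 'a rank"

inductive forceD and forceC
  for app :: "'r \<Rightarrow> ('v,'l) network \<Rightarrow> ('v,'l) network \<Rightarrow> bool" and R :: "'r set" where
  forceD_lost: "\<not> connected_net G \<Longrightarrow> forceD app R Lost G"
| forceD_del: "v \<in> weak G \<Longrightarrow> forceC app R t (delete_node v G) \<Longrightarrow> forceD app R (Del t) G"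
| forceC_lost: "\<not> connected_net G \<Longrightarrow> forceC app R Lost G"
| forceC_resp: "forceD app R (f G) G \<Longrightarrow> (\<forall>r\<in>R. \<forall>G'. app r G G' \<longrightarrow> forceD app R (f G') G')
                 \<Longrightarrow> forceC app R (Resp f) G"

inductive_simps forceD_simps:
  "forceD app R Lost G" "forceD app R (Del t) G" "forceD app R (Resp f) G"
inductive_simps forceC_simps:
  "forceC app R Lost G" "forceC app R (Del t) G" "forceC app R (Resp f) G"

definition in_attractor ::
  "('r \<Rightarrow> ('v,'l) network \<Rightarrow> ('v,'l) network \<Rightarrow> bool) \<Rightarrow> 'r set \<Rightarrow> ('v,'l) network \<Rightarrow> bool" where
  "in_attractor app R G \<longleftrightarrow> (\<exists>t. forceD app R t G)"

lemma outside_attractor_connected: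
  "\<not> in_attractor app R G \<Longrightarrow> connected_net G"
  unfolding in_attractor_def using forceD_lost by blast

text \<open>Constructor may skip, so a forced Constructor position is a forced Destructor
  position: skipping never helps Destructor.\<close>
lemma forceC_imp_in_attractor:
  assumes "forceC app R t G"
  shows "in_attractor app R G"
  using assms unfolding in_attractor_def
  by (cases rule: forceC.cases) (auto intro: forceD_lost)

lemma deletion_outside_attractor:
  assumes "\<not> in_attractor app R G" and "v \<in> weak G"
  shows "\<not> forceC app R t (delete_node v G)"
proof
  assume "forceC app R t (delete_node v G)"
  with assms(2) have "forceD app R (Del t) G" by (rule forceD_del)
  with assms(1) show False unfolding in_attractor_def by blast
qed

text \<open>If the current network and all results of rule applications lie in the attractor,
  the Constructor position is forced: choose a rank for every possible answer.\<close>
lemma all_answers_in_attractor: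
  assumes "in_attractor app R G"
    and "\<forall>r\<in>R. \<forall>G'. app r G G' \<longrightarrow> in_attractor app R G'"
  shows "\<exists>t. forceC app R t G"
proof -
  let ?f = "\<lambda>G. SOME t. forceD app R t G"
  have "forceD app R (?f G') G'" if "in_attractor app R G'" for G'
    using that unfolding in_attractor_def by (rule someI_ex)
  then have "forceC app R (Resp ?f) G"
    using assms by (intro forceC_resp) auto
  then show ?thesis ..
qed

lemma length_hist: "length (hist p i) = Suc i"
  unfolding hist_def by simp

lemma nth_hist: "j \<le> i \<Longrightarrow> hist p i ! j = p j"
  unfolding hist_def by (simp add: nth_append del: upt_Suc)

lemma last_hist: "last (hist p i) = p i"
  unfolding hist_def by simp

section \<open>Constructor wins outside the attractor\<close>

definition avoid_strategy ::
  "('r \<Rightarrow> ('v,'l) network \<Rightarrow> ('v,'l) network \<Rightarrow> bool) \<Rightarrow> 'r set \<Rightarrow>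
   ('v,'l) network list \<Rightarrow> ('v,'l) network" where
  "avoid_strategy app R h =
     (let escapes = \<lambda>G'. (\<exists>r\<in>R. app r (last h) G') \<and> \<not> in_attractor app R G'
      in if \<exists>G'. escapes G' then SOME G'. escapes G' else last h)"

lemma avoid_strategy_cases:
  obtains "\<exists>r\<in>R. app r (last h) (avoid_strategy app R h)"
      and "\<not> in_attractor app R (avoid_strategy app R h)"
  | "avoid_strategy app R h = last h"
    and "\<forall>r\<in>R. \<forall>G'. app r (last h) G' \<longrightarrow> in_attractor app R G'"
proof (cases "\<exists>G'. (\<exists>r\<in>R. app r (last h) G') \<and> \<not> in_attractor app R G'")
  case True
  then have "(\<exists>r\<in>R. app r (last h) (avoid_strategy app R h))
             \<and> \<not> in_attractor app R (avoid_strategy app R h)"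
    using someI_ex[OF True] unfolding avoid_strategy_def Let_def by simp
  then show ?thesis using that(1) by blast
next
  case False
  then have "avoid_strategy app R h = last h"
    unfolding avoid_strategy_def Let_def by (simp only: if_False)
  then show ?thesis using that(2) False by blast
qed

lemma avoid_strategy_legal: "legal_C app R (avoid_strategy app R)"
  unfolding legal_C_def
proof (intro allI impI)
  fix h
  show "avoid_strategy app R h = last h \<or> (\<exists>r\<in>R. app r (last h) (avoid_strategy app R h))"
    by (cases rule: avoid_strategy_cases[of R app h]) simp_all
qed

lemma avoid_strategy_invariant:
  assumes play: "is_play app R G0 p" and cons: "consistent_C (avoid_strategy app R) p"
    and start: "\<not> in_attractor app R G0"
  shows "(even i \<longrightarrow> \<not> in_attractor app R (p i)) \<and> (odd i \<longrightarrow> (\<forall>t. \<not> forceC app R t (p i)))"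
proof (induction i)
  case 0
  then show ?case using play start unfolding is_play_def by auto
next
  case (Suc i)
  show ?case
  proof (cases "even i")
    case True
    with Suc.IH have outside: "\<not> in_attractor app R (p i)" by simp
    from play True have "p (Suc i) = p i \<or> (\<exists>v \<in> weak (p i). p (Suc i) = delete_node v (p i))"
      unfolding is_play_def by auto
    then have "\<forall>t. \<not> forceC app R t (p (Suc i))"
    proof
      assume "p (Suc i) = p i"
      then show ?thesis using outside forceC_imp_in_attractor by auto
    next
      assume "\<exists>v \<in> weak (p i). p (Suc i) = delete_node v (p i)"
      then show ?thesis using outside deletion_outside_attractor[of app R "p i"] by auto
    qed
    then show ?thesis using True by simp
  next
    case False
    with Suc.IH have unforced: "\<forall>t. \<not> forceC app R t (p i)" by simp
    from cons False have next_net: "p (Suc i) = avoid_strategy app R (hist p i)"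
      unfolding consistent_C_def by simp
    have "\<not> in_attractor app R (p (Suc i))"
    proof (cases rule: avoid_strategy_cases[of R app "hist p i"])
      case 1
      then show ?thesis using next_net by simp
    next
      case 2
      then have "p (Suc i) = p i" using next_net by (simp add: last_hist)
      then show ?thesis
        using 2(2) unforced all_answers_in_attractor[of app R "p i"] by (auto simp: last_hist)
    qed
    then show ?thesis using False by simp
  qed
qed

theorem outside_attractor_constructor_wins:
  assumes "\<not> in_attractor app R G0"
  shows "constructor_wins_safety app R G0"
  unfolding constructor_wins_safety_def
proof (intro exI conjI allI impI)
  show "legal_C app R (avoid_strategy app R)" by (rule avoid_strategy_legal)
next
  fix p i assume "is_play app R G0 p \<and> consistent_C (avoid_strategy app R) p"
  then have "(even i \<longrightarrow> \<not> in_attractor app R (p i)) \<and> (odd i \<longrightarrow> (\<forall>t. \<not> forceC app R t (p i)))"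
    using assms avoid_strategy_invariant by blast
  then show "connected_net (p i)"
    using outside_attractor_connected forceC_lost[of "p i" app R] by (cases "even i") auto
qed

section \<open>Destructor wins strictly inside the attractor\<close>

definition advance :: "nat \<Rightarrow> 'a \<Rightarrow> 'a rank \<Rightarrow> 'a rank" where
  "advance i G t = (if even i then (case t of Del t' \<Rightarrow> t' | _ \<Rightarrow> t)
                    else (case t of Resp f \<Rightarrow> f G | _ \<Rightarrow> t))"

primrec rank_along :: "'a rank \<Rightarrow> (nat \<Rightarrow> 'a) \<Rightarrow> nat \<Rightarrow> 'a rank" where
  "rank_along t0 p 0 = t0"
| "rank_along t0 p (Suc i) = advance i (p (Suc i)) (rank_along t0 p i)"

lemma rank_along_cong: "(\<And>j. j \<le> i \<Longrightarrow> q j = p j) \<Longrightarrow> rank_along t0 q i = rank_along t0 p i"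
  by (induction i) auto

definition rank_of_hist :: "'a rank \<Rightarrow> 'a list \<Rightarrow> 'a rank" where
  "rank_of_hist t0 h = rank_along t0 (\<lambda>j. h ! j) (length h - 1)"

lemma rank_of_hist: "rank_of_hist t0 (hist p i) = rank_along t0 p i"
  unfolding rank_of_hist_def length_hist
  using rank_along_cong[of i "\<lambda>j. hist p i ! j" p t0] by (simp add: nth_hist)

definition prefer_elem :: "('a \<Rightarrow> bool) \<Rightarrow> 'a set \<Rightarrow> 'a" where
  "prefer_elem P A = (if \<exists>x\<in>A. P x then SOME x. x \<in> A \<and> P x else SOME x. x \<in> A)"

lemma prefer_elem_mem: "A \<noteq> {} \<Longrightarrow> prefer_elem P A \<in> A"
proof -
  assume "A \<noteq> {}"
  then have "\<exists>x. x \<in> A" by blast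
  then have "(SOME x. x \<in> A) \<in> A" by (rule someI_ex)
  moreover have "(SOME x. x \<in> A \<and> P x) \<in> A" if "\<exists>x\<in>A. P x"
    using someI_ex[of "\<lambda>x. x \<in> A \<and> P x"] that by blast
  ultimately show ?thesis unfolding prefer_elem_def by simp
qed

lemma prefer_elem_prop: "\<exists>x\<in>A. P x \<Longrightarrow> P (prefer_elem P A)"
proof -
  assume "\<exists>x\<in>A. P x"
  then show ?thesis
    using someI_ex[of "\<lambda>x. x \<in> A \<and> P x"] unfolding prefer_elem_def by auto
qed

definition follows_rank ::
  "('r \<Rightarrow> ('v,'l) network \<Rightarrow> ('v,'l) network \<Rightarrow> bool) \<Rightarrow> 'r set \<Rightarrow>
   ('v,'l) network rank \<Rightarrow> ('v,'l) network \<Rightarrow> 'v \<Rightarrow> bool" where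
  "follows_rank app R t G v = (case t of Del t' \<Rightarrow> forceC app R t' (delete_node v G) | _ \<Rightarrow> False)"

definition rank_strategy ::
  "('r \<Rightarrow> ('v,'l) network \<Rightarrow> ('v,'l) network \<Rightarrow> bool) \<Rightarrow> 'r set \<Rightarrow>
   ('v,'l) network rank \<Rightarrow> ('v,'l) network list \<Rightarrow> 'v option" where
  "rank_strategy app R t0 h =
     (if weak (last h) = {} then None
      else Some (prefer_elem (follows_rank app R (rank_of_hist t0 h) (last h)) (weak (last h))))"

lemma rank_strategy_legal: "legal_D (rank_strategy app R t0)"
  unfolding legal_D_def rank_strategy_def by (auto intro: prefer_elem_mem)

lemma rank_strategy_strict: "strict_D (rank_strategy app R t0)"
  unfolding strict_D_def rank_strategy_def by simp

lemma rank_strategy_forces: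
  assumes play: "is_play app R G0 p" and cons: "consistent_D (rank_strategy app R t0) p"
  shows "rank_along t0 p i = t \<Longrightarrow>
         (if even i then forceD app R t (p i) else forceC app R t (p i)) \<Longrightarrow>
         \<exists>j. \<not> connected_net (p j)"
proof (induction t arbitrary: i)
  case Lost
  then show ?case by (cases "even i") (auto simp: forceD_simps forceC_simps)
next
  case (Del t')
  then have even: "even i" and forced: "forceD app R (Del t') (p i)"
    by (auto simp: forceC_simps split: if_splits)
  then have good: "\<exists>v\<in>weak (p i). follows_rank app R (Del t') (p i) v"
    by (auto simp: forceD_simps follows_rank_def)
  define v where "v = prefer_elem (follows_rank app R (Del t') (p i)) (weak (p i))"
  have "rank_strategy app R t0 (hist p i) = Some v"
    using good Del.prems(1) unfolding rank_strategy_def v_def last_hist rank_of_hist by auto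
  then have "p (Suc i) = delete_node v (p i)"
    using cons even unfolding consistent_D_def by auto
  then have "forceC app R t' (p (Suc i))"
    using prefer_elem_prop[OF good] unfolding v_def follows_rank_def by simp
  moreover have "rank_along t0 p (Suc i) = t'"
    using Del.prems(1) even by (simp add: advance_def)
  ultimately show ?case using Del.IH[of "Suc i"] even by simp
next
  case (Resp f)
  then have odd: "odd i" and forced: "forceC app R (Resp f) (p i)"
    by (auto simp: forceD_simps split: if_splits)
  from play odd have "p (Suc i) = p i \<or> (\<exists>r \<in> R. app r (p i) (p (Suc i)))"
    unfolding is_play_def by auto
  then have "forceD app R (f (p (Suc i))) (p (Suc i))"
    using forced by (auto simp: forceC_simps)
  moreover have "rank_along t0 p (Suc i) = f (p (Suc i))"
    using Resp.prems(1) odd by (simp add: advance_def)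
  moreover have "f (p (Suc i)) \<in> range f" by simp
  ultimately show ?case using Resp.IH[of "f (p (Suc i))" "Suc i"] odd by simp
qed

theorem inside_attractor_strict_win:
  assumes "forceD app R t0 G0"
  shows "strict_D (rank_strategy app R t0) \<and> D_strategy_wins_safety app R G0 (rank_strategy app R t0)"
  unfolding D_strategy_wins_safety_def
proof (intro conjI allI impI rank_strategy_strict rank_strategy_legal)
  fix p assume "is_play app R G0 p \<and> consistent_D (rank_strategy app R t0) p"
  moreover from this have "p 0 = G0" unfolding is_play_def by simp
  ultimately show "\<exists>i. \<not> connected_net (p i)"
    using rank_strategy_forces[of app R G0 p t0 0 t0] assms by simp
qed

theorem mainTheorem2:
  fixes app :: "'r \<Rightarrow> ('v,'l) network \<Rightarrow> ('v,'l) network \<Rightarrow> bool"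
    and R :: "'r set"
    and G0 :: "('v,'l) network"
  assumes "wf_network G0"
    and "connected_net G0"
    and "destructor_wins_safety app R G0"
  shows "\<exists>\<sigma>. strict_D \<sigma> \<and> D_strategy_wins_safety app R G0 \<sigma>"
proof -
  have "in_attractor app R G0"
    using assms(3) outside_attractor_constructor_wins
    unfolding destructor_wins_safety_def by blast
  then obtain t0 where "forceD app R t0 G0"
    unfolding in_attractor_def by blast
  then show ?thesis using inside_attractor_strict_win by blast
qed

end
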